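(* Let $A$ be an associative ring, $n\ge2$, $1\le k\le n-1$, $a\in A$. For any $\omega\in Br_n$ (viewed in $Br_n(A)$ via $y_i\mapsto y_i^0$), the element $\omega\, y_k^a (y_k^0)^{-1}\omega^{-1}\in Br_n(A)$ depends only on the image $\bar\omega$ of $\omega$ in $\mathcal S_n$. Moreover, if $\bar\omega(j)=k$ and $\bar\omega(j+1)=k+1$, then $\omega\, y_k^a (y_k^0)^{-1}\omega^{-1} = y_j^a (y_j^0)^{-1}$.
   Context: $Br_n(A)$ is the group generated by $y_i^a$, $1\le i\le n-1$, $a\in A$, with relations for all $a,b,c\in A$: $y_i^a y_i^0 y_i^b = y_i^0 y_i^0 y_i^{a+b}$; $y_i^a y_j^b = y_j^b y_i^a$ if $|i-j|\ge 2$; $y_i^a y_{i+1}^b y_i^c = y_{i+1}^c y_i^{b+ac} y_{i+1}^a$. $Br_n$ is the Artin braid group (generators $y_i$, relations $y_iy_j=y_jy_i$ for $|i-j|\ge 2$, $y_iy_{i+1}y_i=y_{i+1}y_iy_{i+1}$), identified with the subgroup of $Br_n(A)$ generated by the $y_i^0$; $\bar\omega$ denotes the image of $\omega$ under the surjection $Br_n\to\mathcal S_n$, $y_i\mapsto(i\ i+1)$. *)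

theory Defs
  imports Main "HOL-Combinatorics.Transposition"
begin

text \<open>Words in the generators of Br_n(A). A letter (e, i, a) stands for the generator
  y_i^a if e = False and for its inverse (y_i^a)^(-1) if e = True.\<close>

type_synonym 'a brletter = "bool \<times> nat \<times> 'a"

definition inv_letter :: "'a brletter \<Rightarrow> 'a brletter" where
  "inv_letter x = (\<not> fst x, snd x)"

definition inv_word :: "'a brletter list \<Rightarrow> 'a brletter list" where
  "inv_word w = rev (map inv_letter w)"

inductive br_eq :: "nat \<Rightarrow> ('a::ring) brletter list \<Rightarrow> 'a brletter list \<Rightarrow> bool"
  for n :: nat where
  refl: "br_eq n w w"
| sym: "br_eq n u v \<Longrightarrow> br_eq n v u"
| trans: "br_eq n u v \<Longrightarrow> br_eq n v w \<Longrightarrow> br_eq n u w"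
| ctx: "br_eq n u v \<Longrightarrow> br_eq n (p @ u @ q) (p @ v @ q)"
| cancel: "br_eq n [x, inv_letter x] []"
| rel1: "1 \<le> i \<Longrightarrow> i \<le> n - 1 \<Longrightarrow>
    br_eq n [(False, i, a), (False, i, 0), (False, i, b)]
            [(False, i, 0), (False, i, 0), (False, i, a + b)]"
| rel2: "1 \<le> i \<Longrightarrow> i \<le> n - 1 \<Longrightarrow> 1 \<le> j \<Longrightarrow> j \<le> n - 1 \<Longrightarrow>
    i + 2 \<le> j \<or> j + 2 \<le> i \<Longrightarrow>
    br_eq n [(False, i, a), (False, j, b)] [(False, j, b), (False, i, a)]"
| rel3: "1 \<le> i \<Longrightarrow> i + 1 \<le> n - 1 \<Longrightarrow>
    br_eq n [(False, i, a), (False, i + 1, b), (False, i, c)]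
            [(False, i + 1, c), (False, i, b + a * c), (False, i + 1, a)]"

text \<open>Words in the Artin braid group Br_n: (e, i) is y_i (e = False) or y_i^(-1) (e = True).\<close>

definition braid_word :: "nat \<Rightarrow> (bool \<times> nat) list \<Rightarrow> bool" where
  "braid_word n w \<longleftrightarrow> (\<forall>x \<in> set w. 1 \<le> snd x \<and> snd x \<le> n - 1)"

definition embed_braid :: "(bool \<times> nat) list \<Rightarrow> ('a::ring) brletter list" where
  "embed_braid w = map (\<lambda>(e, i). (e, i, 0)) w"

text \<open>Image in S_n (as a permutation of the naturals fixing everything outside {1..n}),
  y_i \<mapsto> (i i+1). Products are composed left to right: the first letter acts first.\<close>

definition braid_perm :: "(bool \<times> nat) list \<Rightarrow> nat \<Rightarrow> nat" where
  "braid_perm w = foldl (\<lambda>f x. transpose (snd x) (snd x + 1) \<circ> f) id w"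

definition conj_word :: "(bool \<times> nat) list \<Rightarrow> nat \<Rightarrow> ('a::ring) \<Rightarrow> 'a brletter list" where
  "conj_word w k a = embed_braid w @ [(False, k, a), (True, k, 0)] @ inv_word (embed_braid w)"

end

(*
  The elements x_k = y_k^a (y_k^0)^-1 attached to the adjacent pairs (k, k+1) extend to
  elements X(p, q) for all ordered pairs p ~= q in {1..n}: conjugate x_(q-1) by y_p ... y_(q-2)
  if p < q, and x_(p-1) by y_q ... y_(p-1) if q < p.  Using only the defining relations one
  checks, case by case on the position of i relative to p and q, that conjugation by y_i maps
  X(p, q) to X(s p, s q) for the transposition s = (i i+1); the delicate case needs that y_i^2
  commutes with X(i+1, q).  Induction along a braid word w then gives
  w x_k w^-1 = X(pi^-1 k, pi^-1 (k+1)) for the permutation pi of w, which depends only on pi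
  and equals X(j, j+1) = x_j when pi j = k and pi (j+1) = k+1.
*)

theory Submission
  imports Defs
begin

lemma inv_letter_Pair [simp]: "inv_letter (e, i, b) = (\<not> e, i, b)"
  by (simp add: inv_letter_def)

lemma inv_word_Nil [simp]: "inv_word [] = []"
  by (simp add: inv_word_def)

lemma inv_word_Cons [simp]: "inv_word (x # w) = inv_word w @ [inv_letter x]"
  by (simp add: inv_word_def)

lemma inv_word_append [simp]: "inv_word (u @ v) = inv_word v @ inv_word u"
  by (simp add: inv_word_def)

lemma inv_word_inv_word [simp]: "inv_word (inv_word w) = w"
  by (simp add: inv_word_def rev_map comp_def inv_letter_def)

lemmas [trans] = br_eq.trans

lemma br_eq_append:
  assumes "br_eq n u u'" "br_eq n v v'"
  shows "br_eq n (u @ v) (u' @ v')"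
proof -
  have "br_eq n (u @ v) (u' @ v)"
    using br_eq.ctx[OF assms(1), of "[]" v] by simp
  also have "br_eq n \<dots> (u' @ v')"
    using br_eq.ctx[OF assms(2), of u' "[]"] by simp
  finally show ?thesis .
qed

lemma br_eq_append_left: "br_eq n v v' \<Longrightarrow> br_eq n (u @ v) (u @ v')"
  by (rule br_eq_append[OF br_eq.refl])

lemma br_eq_append_right: "br_eq n u u' \<Longrightarrow> br_eq n (u @ v) (u' @ v)"
  by (rule br_eq_append[OF _ br_eq.refl])

lemma br_eq_cancel_right_inverse: "br_eq n (u @ w @ inv_word w @ v) (u @ v)"
proof -
  have "br_eq n (w @ inv_word w) []"
  proof (induction w)
    case (Cons x w)
    have "br_eq n ([x] @ (w @ inv_word w) @ [inv_letter x]) ([x] @ [] @ [inv_letter x])"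
      using Cons.IH by (rule br_eq.ctx)
    then show ?case
      using br_eq.trans[OF _ br_eq.cancel[of n x]] by simp
  qed (simp add: br_eq.refl)
  from br_eq.ctx[OF this, of u v] show ?thesis
    by simp
qed

lemma br_eq_cancel_left_inverse: "br_eq n (u @ inv_word w @ w @ v) (u @ v)"
  using br_eq_cancel_right_inverse[of n u "inv_word w" v] by simp

lemma br_eq_cancel_right:
  assumes "br_eq n (u @ g) (v @ g)"
  shows "br_eq n u v"
proof -
  have "br_eq n u (u @ g @ inv_word g)"
    using br_eq.sym[OF br_eq_cancel_right_inverse[of n u g "[]"]] by simp
  also have "br_eq n \<dots> (v @ g @ inv_word g)"
    using br_eq_append_right[OF assms] by simp
  also have "br_eq n \<dots> v"
    using br_eq_cancel_right_inverse[of n v g "[]"] by simp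
  finally show ?thesis .
qed

lemma br_eq_inv_word:
  assumes "br_eq n u v"
  shows "br_eq n (inv_word u) (inv_word v)"
proof -
  have "br_eq n (inv_word u) (inv_word u @ v @ inv_word v)"
    using br_eq.sym[OF br_eq_cancel_right_inverse[of n "inv_word u" v "[]"]] by simp
  also have "br_eq n \<dots> (inv_word u @ u @ inv_word v)"
    by (intro br_eq_append_left br_eq_append_right br_eq.sym[OF assms])
  also have "br_eq n \<dots> (inv_word v)"
    using br_eq_cancel_left_inverse[of n "[]" u "inv_word v"] by simp
  finally show ?thesis .
qed

definition conj_by :: "'a brletter list \<Rightarrow> 'a brletter list \<Rightarrow> 'a brletter list" where
  "conj_by g x = g @ x @ inv_word g"

lemma conj_by_Nil [simp]: "conj_by [] x = x"
  by (simp add: conj_by_def)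

lemma conj_by_append: "conj_by (g @ h) x = conj_by g (conj_by h x)"
  by (simp add: conj_by_def)

lemma inv_word_conj_by: "inv_word (conj_by g x) = conj_by g (inv_word x)"
  by (simp add: conj_by_def)

lemma br_eq_conj_by: "br_eq n x y \<Longrightarrow> br_eq n (conj_by g x) (conj_by g y)"
  unfolding conj_by_def by (rule br_eq.ctx)

lemma br_eq_conj_by_conjugator: "br_eq n g h \<Longrightarrow> br_eq n (conj_by g x) (conj_by h x)"
  unfolding conj_by_def by (intro br_eq_append br_eq.refl br_eq_inv_word)

lemma conj_by_append_distrib: "br_eq n (conj_by g (x @ y)) (conj_by g x @ conj_by g y)"
  unfolding conj_by_def
  using br_eq.sym[OF br_eq_cancel_left_inverse[of n "g @ x" g "y @ inv_word g"]] by simp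

lemma conj_by_append_conjugator: "br_eq n (conj_by g x @ g) (g @ x)"
  unfolding conj_by_def using br_eq_cancel_left_inverse[of n "g @ x" g "[]"] by simp

lemma conj_by_eq_iff: "br_eq n (conj_by g x) y \<longleftrightarrow> br_eq n (g @ x) (y @ g)"
proof
  assume "br_eq n (conj_by g x) y"
  have "br_eq n (g @ x) (conj_by g x @ g)"
    by (rule br_eq.sym[OF conj_by_append_conjugator])
  also have "br_eq n \<dots> (y @ g)"
    using \<open>br_eq n (conj_by g x) y\<close> by (rule br_eq_append_right)
  finally show "br_eq n (g @ x) (y @ g)" .
next
  assume "br_eq n (g @ x) (y @ g)"
  then have "br_eq n (conj_by g x) (y @ g @ inv_word g)"
    using br_eq_append_right[of n "g @ x" "y @ g" "inv_word g"] by (simp add: conj_by_def)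
  also have "br_eq n \<dots> y"
    using br_eq_cancel_right_inverse[of n y g "[]"] by simp
  finally show "br_eq n (conj_by g x) y" .
qed

lemma conj_by_inv_word_conj_by: "br_eq n (conj_by (inv_word g) (conj_by g x)) x"
proof -
  have "br_eq n (conj_by (inv_word g) (conj_by g x)) (x @ inv_word g @ g)"
    using br_eq_cancel_left_inverse[of n "[]" g "x @ inv_word g @ g"] by (simp add: conj_by_def)
  also have "br_eq n \<dots> x"
    using br_eq_cancel_left_inverse[of n x g "[]"] by simp
  finally show ?thesis .
qed

lemma conj_by_eq_swap:
  assumes "br_eq n (conj_by g x) y"
  shows "br_eq n x (conj_by (inv_word g) y)"
proof -
  have "br_eq n x (conj_by (inv_word g) (conj_by g x))"
    by (rule br_eq.sym[OF conj_by_inv_word_conj_by])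
  also have "br_eq n \<dots> (conj_by (inv_word g) y)"
    by (rule br_eq_conj_by[OF assms])
  finally show ?thesis .
qed

definition br_commute :: "nat \<Rightarrow> ('a::ring) brletter list \<Rightarrow> 'a brletter list \<Rightarrow> bool" where
  "br_commute n u v \<longleftrightarrow> br_eq n (u @ v) (v @ u)"

lemma br_commute_sym: "br_commute n u v \<Longrightarrow> br_commute n v u"
  unfolding br_commute_def by (rule br_eq.sym)

lemma br_commute_Nil [simp]: "br_commute n u []"
  by (simp add: br_commute_def br_eq.refl)

lemma br_commute_iff_conj_by: "br_commute n g x \<longleftrightarrow> br_eq n (conj_by g x) x"
  by (simp add: br_commute_def conj_by_eq_iff)

lemma br_commute_append:
  assumes "br_commute n u v" "br_commute n u w"
  shows "br_commute n u (v @ w)"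
proof -
  have "br_eq n (u @ v @ w) (v @ u @ w)"
    using br_eq_append_right[OF assms(1)[unfolded br_commute_def], of w] by simp
  also have "br_eq n \<dots> (v @ w @ u)"
    using br_eq_append_left[OF assms(2)[unfolded br_commute_def], of v] by simp
  finally show ?thesis
    by (simp add: br_commute_def)
qed

lemma br_commute_inv_word:
  assumes "br_commute n u v"
  shows "br_commute n u (inv_word v)"
proof -
  have "br_eq n (conj_by v u) u"
    using br_commute_sym[OF assms] by (simp add: br_commute_iff_conj_by)
  then have "br_eq n u (conj_by (inv_word v) u)"
    by (rule conj_by_eq_swap)
  then have "br_commute n (inv_word v) u"
    unfolding br_commute_iff_conj_by by (rule br_eq.sym)
  then show ?thesis
    by (rule br_commute_sym)
qed

lemma br_commute_cong: "br_eq n v v' \<Longrightarrow> br_commute n u v \<Longrightarrow> br_commute n u v'"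
  unfolding br_commute_def by (meson br_eq_append_left br_eq_append_right br_eq.sym br_eq.trans)

lemma br_commute_cong_left: "br_eq n u u' \<Longrightarrow> br_commute n u v \<Longrightarrow> br_commute n u' v"
  by (meson br_commute_cong br_commute_sym)

lemma br_commute_conj_by: "br_commute n u g \<Longrightarrow> br_commute n u x \<Longrightarrow> br_commute n u (conj_by g x)"
  unfolding conj_by_def by (intro br_commute_append br_commute_inv_word)

lemma br_commute_conj_by_both:
  assumes "br_commute n u v"
  shows "br_commute n (conj_by g u) (conj_by g v)"
proof -
  have "br_eq n (conj_by g u @ conj_by g v) (conj_by g (u @ v))"
    by (rule br_eq.sym[OF conj_by_append_distrib])
  also have "br_eq n \<dots> (conj_by g (v @ u))"
    using assms by (simp add: br_commute_def br_eq_conj_by)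
  also have "br_eq n \<dots> (conj_by g v @ conj_by g u)"
    by (rule conj_by_append_distrib)
  finally show ?thesis
    by (simp add: br_commute_def)
qed

lemma conj_by_commute:
  "br_commute n g h \<Longrightarrow> br_eq n (conj_by g (conj_by h x)) (conj_by h (conj_by g x))"
  unfolding conj_by_append[symmetric] br_commute_def by (rule br_eq_conj_by_conjugator)

lemma br_commute_letters:
  "(\<And>x y. x \<in> set u \<Longrightarrow> y \<in> set v \<Longrightarrow> br_commute n [x] [y]) \<Longrightarrow> br_commute n u v"
proof (induction u)
  case (Cons x u)
  have "br_commute n [x] v"
    using Cons.prems
  proof (induction v)
    case (Cons y v)
    then have "br_commute n [x] ([y] @ v)"
      by (intro br_commute_append) auto
    then show ?case
      by simp
  qed simp
  with Cons have "br_commute n v ([x] @ u)"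
    by (intro br_commute_append) (auto intro: br_commute_sym)
  then show ?case
    by (simp add: br_commute_sym)
qed (simp add: br_commute_sym)

definition indices :: "'a brletter list \<Rightarrow> nat set" where
  "indices w = (\<lambda>x. fst (snd x)) ` set w"

lemma indices_Nil [simp]: "indices [] = {}"
  by (simp add: indices_def)

lemma indices_Cons [simp]: "indices ((e, i, b) # w) = insert i (indices w)"
  by (simp add: indices_def)

lemma indices_append [simp]: "indices (u @ v) = indices u \<union> indices v"
  by (simp add: indices_def image_Un)

lemma indices_inv_word [simp]: "indices (inv_word w) = indices w"
  by (force simp: indices_def inv_word_def inv_letter_def)

lemma indices_conj_by [simp]: "indices (conj_by g x) = indices g \<union> indices x"
  by (auto simp: conj_by_def)

definition far_apart :: "nat \<Rightarrow> nat set \<Rightarrow> nat set \<Rightarrow> bool" where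
  "far_apart n I J \<longleftrightarrow>
     (\<forall>i\<in>I. \<forall>j\<in>J. 1 \<le> i \<and> i \<le> n - 1 \<and> 1 \<le> j \<and> j \<le> n - 1 \<and> (i + 2 \<le> j \<or> j + 2 \<le> i))"

lemma br_commute_far_letters:
  assumes "far_apart n {i} {j}"
  shows "br_commute n [(e, i, a)] [(e', j, b)]"
proof -
  have "1 \<le> i" "i \<le> n - 1" "1 \<le> j" "j \<le> n - 1" "i + 2 \<le> j \<or> j + 2 \<le> i"
    using assms by (auto simp: far_apart_def)
  then have gens: "br_commute n [(False, i, a)] [(False, j, b)]" for a b
    using br_eq.rel2 by (simp add: br_commute_def)
  have right: "br_commute n [(False, i, a)] [(e', j, b)]" for a
    using gens br_commute_inv_word[OF gens[of a b]] by (cases e') simp_all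
  show ?thesis
    using right br_commute_sym[OF br_commute_inv_word[OF br_commute_sym[OF right[of a]]]]
    by (cases e) simp_all
qed

lemma br_commute_far:
  assumes "far_apart n (indices u) (indices v)"
  shows "br_commute n u v"
proof (rule br_commute_letters)
  fix x y
  assume xy: "x \<in> set u" "y \<in> set v"
  obtain e i c e' j d where x: "x = (e, i, c)" and y: "y = (e', j, d)"
    by (cases x, cases y)
  have "i \<in> indices u" "j \<in> indices v"
    using xy by (force simp: indices_def x y)+
  with assms have "far_apart n {i} {j}"
    by (simp add: far_apart_def)
  then show "br_commute n [x] [y]"
    by (simp add: x y br_commute_far_letters)
qed

abbreviation y0 :: "nat \<Rightarrow> ('a::zero) brletter list" where
  "y0 i \<equiv> [(False, i, 0)]"

definition x_word :: "'a::zero \<Rightarrow> nat \<Rightarrow> 'a brletter list" where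
  "x_word a i = [(False, i, a), (True, i, 0)]"

lemma indices_x_word [simp]: "indices (x_word a i) = {i}"
  by (simp add: x_word_def)

lemma x_word_append_y0: "br_eq n (x_word a i @ y0 i) [(False, i, a)]"
  using br_eq_cancel_left_inverse[of n "[(False, i, a)]" "y0 i" "[]"] by (simp add: x_word_def)

lemma braid_relation:
  assumes "1 \<le> i" "i + 1 \<le> n - 1"
  shows "br_eq n (y0 i @ y0 (i + 1) @ y0 i) (y0 (i + 1) @ y0 i @ y0 (i + 1))"
  using br_eq.rel3[OF assms, of 0 0 0] by simp

lemma conj_by_braid_y0:
  assumes "1 \<le> i" "i + 1 \<le> n - 1"
  shows "br_eq n (conj_by (y0 (i + 1) @ y0 i) (y0 (i + 1))) (y0 i)"
  using br_eq.sym[OF braid_relation[OF assms]] by (simp add: conj_by_eq_iff)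

lemma conj_by_braid_y0_square:
  assumes "1 \<le> i" "i + 1 \<le> n - 1"
  shows "br_eq n (conj_by (y0 (i + 1) @ y0 i) (y0 (i + 1) @ y0 (i + 1))) (y0 i @ y0 i)"
  using br_eq.trans[OF conj_by_append_distrib
      br_eq_append[OF conj_by_braid_y0[OF assms] conj_by_braid_y0[OF assms]]] .

lemma conj_by_x_word:
  assumes "\<And>c. br_eq n (conj_by g [(False, i, c)]) [(False, j, c)]"
  shows "br_eq n (conj_by g (x_word a i)) (x_word a j)"
proof -
  have "conj_by g (x_word a i) = conj_by g ([(False, i, a)] @ inv_word (y0 i))"
    by (simp add: x_word_def)
  also have "br_eq n \<dots> (conj_by g [(False, i, a)] @ inv_word (conj_by g (y0 i)))"
    unfolding inv_word_conj_by by (rule conj_by_append_distrib)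
  also have "br_eq n \<dots> ([(False, j, a)] @ inv_word (y0 j))"
    by (intro br_eq_append br_eq_inv_word assms)
  finally show ?thesis
    by (simp add: x_word_def)
qed

lemma conj_by_x_word_up:
  assumes "1 \<le> i" "i + 1 \<le> n - 1"
  shows "br_eq n (conj_by (y0 i @ y0 (i + 1)) (x_word a i)) (x_word a (i + 1))"
  by (rule conj_by_x_word) (use br_eq.rel3[OF assms, of 0 0] in \<open>simp add: conj_by_eq_iff\<close>)

lemma conj_by_x_word_down:
  assumes "1 \<le> i" "i + 1 \<le> n - 1"
  shows "br_eq n (conj_by (y0 (i + 1) @ y0 i) (x_word a (i + 1))) (x_word a i)"
  by (rule conj_by_x_word) (use br_eq.sym[OF br_eq.rel3[OF assms, of _ 0 0]] in \<open>simp add: conj_by_eq_iff\<close>)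

(* After right multiplication by y_(i+1) y_i y_(i+1) = y_i y_(i+1) y_i the two sides become
   y_(i+1) y_i^a y_(i+1) and y_i y_(i+1)^a y_i, equal by the third relation with a = c = 0. *)

lemma conj_y0_x_word_swap:
  assumes "1 \<le> i" "i + 1 \<le> n - 1"
  shows "br_eq n (conj_by (y0 (i + 1)) (x_word a i)) (conj_by (y0 i) (x_word a (i + 1)))"
proof (rule br_eq_cancel_right)
  let ?g = "y0 (i + 1) @ y0 i @ y0 (i + 1)"
  have "br_eq n (conj_by (y0 (i + 1)) (x_word a i) @ ?g) (y0 (i + 1) @ (x_word a i @ y0 i) @ y0 (i + 1))"
    using br_eq_append_right[OF conj_by_append_conjugator[of n "y0 (i + 1)" "x_word a i"],
        of "y0 i @ y0 (i + 1)"]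
    by simp
  also have "br_eq n \<dots> [(False, i + 1, 0), (False, i, a), (False, i + 1, 0)]"
    using br_eq.ctx[OF x_word_append_y0[of n a i], of "y0 (i + 1)" "y0 (i + 1)"] by simp
  also have "br_eq n \<dots> [(False, i, 0), (False, i + 1, a), (False, i, 0)]"
    using br_eq.sym[OF br_eq.rel3[OF assms, of 0 a 0]] by simp
  also have "br_eq n \<dots> (y0 i @ (x_word a (i + 1) @ y0 (i + 1)) @ y0 i)"
    using br_eq.sym[OF br_eq.ctx[OF x_word_append_y0[of n a "i + 1"], of "y0 i" "y0 i"]] by simp
  also have "br_eq n \<dots> (conj_by (y0 i) (x_word a (i + 1)) @ y0 i @ y0 (i + 1) @ y0 i)"
    using br_eq.sym[OF br_eq_append_right[OF conj_by_append_conjugator[of n "y0 i" "x_word a (i + 1)"],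
          of "y0 (i + 1) @ y0 i"]]
    by simp
  also have "br_eq n \<dots> (conj_by (y0 i) (x_word a (i + 1)) @ ?g)"
    by (rule br_eq_append_left[OF braid_relation[OF assms]])
  finally show "br_eq n (conj_by (y0 (i + 1)) (x_word a i) @ ?g) (conj_by (y0 i) (x_word a (i + 1)) @ ?g)" .
qed

lemma br_commute_square_of_conj_by:
  assumes "br_eq n (conj_by (inv_word g) x) (conj_by g x)"
  shows "br_commute n (g @ g) x"
proof -
  have "br_eq n x (conj_by g (conj_by g x))"
    using conj_by_eq_swap[OF assms] by simp
  then show ?thesis
    unfolding br_commute_iff_conj_by conj_by_append by (rule br_eq.sym)
qed

lemma y0_square_commute_x_word:
  assumes "1 \<le> i" "i \<le> n - 1"
  shows "br_commute n (y0 i @ y0 i) (x_word a i)"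
proof -
  have "br_commute n (y0 i @ y0 i) [(False, i, a)]"
    using br_eq.sym[OF br_eq.rel1[OF assms, of a 0]] by (simp add: br_commute_def)
  moreover have "br_commute n (y0 i @ y0 i) (y0 i)"
    by (simp add: br_commute_def br_eq.refl)
  ultimately have "br_commute n (y0 i @ y0 i) ([(False, i, a)] @ inv_word (y0 i))"
    by (intro br_commute_append br_commute_inv_word)
  then show ?thesis
    by (simp add: x_word_def)
qed

lemma y0_square_commute_x_word_prev:
  assumes "1 \<le> i" "i + 1 \<le> n - 1"
  shows "br_commute n (y0 (i + 1) @ y0 (i + 1)) (x_word a i)"
proof (rule br_commute_square_of_conj_by)
  have "br_eq n (conj_by (inv_word (y0 (i + 1))) (x_word a i))
      (conj_by (inv_word (y0 (i + 1))) (conj_by (y0 (i + 1)) (conj_by (y0 i) (x_word a (i + 1)))))"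
    using br_eq.sym[OF conj_by_x_word_down[OF assms]] unfolding conj_by_append by (rule br_eq_conj_by)
  also have "br_eq n \<dots> (conj_by (y0 i) (x_word a (i + 1)))"
    by (rule conj_by_inv_word_conj_by)
  also have "br_eq n \<dots> (conj_by (y0 (i + 1)) (x_word a i))"
    by (rule br_eq.sym[OF conj_y0_x_word_swap[OF assms]])
  finally show "br_eq n (conj_by (inv_word (y0 (i + 1))) (x_word a i)) (conj_by (y0 (i + 1)) (x_word a i))" .
qed

lemma y0_square_commute_x_word_next:
  assumes "1 \<le> i" "i + 1 \<le> n - 1"
  shows "br_commute n (y0 i @ y0 i) (x_word a (i + 1))"
proof (rule br_commute_square_of_conj_by)
  have "br_eq n (conj_by (inv_word (y0 i)) (x_word a (i + 1)))
      (conj_by (inv_word (y0 i)) (conj_by (y0 i) (conj_by (y0 (i + 1)) (x_word a i))))"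
    using br_eq.sym[OF conj_by_x_word_up[OF assms]] unfolding conj_by_append by (rule br_eq_conj_by)
  also have "br_eq n \<dots> (conj_by (y0 (i + 1)) (x_word a i))"
    by (rule conj_by_inv_word_conj_by)
  also have "br_eq n \<dots> (conj_by (y0 i) (x_word a (i + 1)))"
    by (rule conj_y0_x_word_swap[OF assms])
  finally show "br_eq n (conj_by (inv_word (y0 i)) (x_word a (i + 1))) (conj_by (y0 i) (x_word a (i + 1)))" .
qed

definition x_twisted :: "'a::zero \<Rightarrow> bool \<Rightarrow> nat \<Rightarrow> 'a brletter list" where
  "x_twisted a b r = (if b then conj_by (y0 r) (x_word a r) else x_word a r)"

lemma indices_x_twisted [simp]: "indices (x_twisted a b r) = {r}"
  by (simp add: x_twisted_def)

lemma y0_square_commute_x_twisted_next: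
  assumes "1 \<le> i" "i + 1 \<le> n - 1"
  shows "br_commute n (y0 i @ y0 i) (x_twisted a b (i + 1))"
proof (cases b)
  case True
  let ?g = "y0 (i + 1) @ y0 i"
  have "br_commute n (y0 (i + 1) @ y0 (i + 1)) (conj_by (y0 (i + 1)) (x_word a i))"
    by (rule br_commute_conj_by[OF _ y0_square_commute_x_word_prev[OF assms]])
      (simp add: br_commute_def br_eq.refl)
  then have "br_commute n (conj_by ?g (y0 (i + 1) @ y0 (i + 1)))
      (conj_by ?g (conj_by (y0 (i + 1)) (x_word a i)))"
    by (rule br_commute_conj_by_both)
  then have "br_commute n (y0 i @ y0 i) (conj_by ?g (conj_by (y0 (i + 1)) (x_word a i)))"
    by (rule br_commute_cong_left[OF conj_by_braid_y0_square[OF assms]])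
  also have "conj_by ?g (conj_by (y0 (i + 1)) (x_word a i))
      = conj_by (y0 (i + 1)) (conj_by (y0 i @ y0 (i + 1)) (x_word a i))"
    by (simp only: conj_by_append append_assoc)
  finally have "br_commute n (y0 i @ y0 i) (conj_by (y0 (i + 1)) (conj_by (y0 i @ y0 (i + 1)) (x_word a i)))" .
  then have "br_commute n (y0 i @ y0 i) (conj_by (y0 (i + 1)) (x_word a (i + 1)))"
    by (rule br_commute_cong[OF br_eq_conj_by[OF conj_by_x_word_up[OF assms]]])
  with True show ?thesis
    by (simp add: x_twisted_def)
qed (use y0_square_commute_x_word_next[OF assms, of a] in \<open>simp add: x_twisted_def\<close>)

lemma conj_by_x_twisted_down:
  assumes "1 \<le> i" "i + 1 \<le> n - 1"
  shows "br_eq n (conj_by (y0 (i + 1) @ y0 i) (x_twisted a b (i + 1))) (x_twisted a b i)"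
proof (cases b)
  case True
  have "conj_by (y0 (i + 1) @ y0 i) (x_twisted a b (i + 1))
      = conj_by (y0 (i + 1) @ y0 i @ y0 (i + 1)) (x_word a (i + 1))"
    using True by (simp add: x_twisted_def conj_by_def)
  also have "br_eq n \<dots> (conj_by (y0 i @ y0 (i + 1) @ y0 i) (x_word a (i + 1)))"
    by (rule br_eq_conj_by_conjugator[OF br_eq.sym[OF braid_relation[OF assms]]])
  also have "\<dots> = conj_by (y0 i) (conj_by (y0 (i + 1) @ y0 i) (x_word a (i + 1)))"
    by (simp add: conj_by_def)
  also have "br_eq n \<dots> (conj_by (y0 i) (x_word a i))"
    by (rule br_eq_conj_by[OF conj_by_x_word_down[OF assms]])
  finally show ?thesis
    using True by (simp add: x_twisted_def)
qed (use conj_by_x_word_down[OF assms, of a] in \<open>simp add: x_twisted_def\<close>)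

lemma conj_y0_x_twisted_swap:
  assumes "1 \<le> i" "i + 1 \<le> n - 1"
  shows "br_eq n (conj_by (y0 (i + 1)) (x_twisted a b i)) (conj_by (y0 i) (x_twisted a b (i + 1)))"
proof (cases b)
  case True
  have "conj_by (y0 (i + 1)) (x_twisted a b i) = conj_by (y0 (i + 1) @ y0 i) (x_word a i)"
    using True by (simp add: x_twisted_def conj_by_def)
  also have "br_eq n \<dots> (conj_by (y0 (i + 1) @ y0 i) (conj_by (y0 (i + 1) @ y0 (i + 1)) (x_word a i)))"
    using y0_square_commute_x_word_prev[OF assms]
    unfolding br_commute_iff_conj_by by (rule br_eq_conj_by[OF br_eq.sym])
  also have "\<dots> = conj_by ((y0 (i + 1) @ y0 i @ y0 (i + 1)) @ y0 (i + 1)) (x_word a i)"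
    by (simp add: conj_by_def)
  also have "br_eq n \<dots> (conj_by ((y0 i @ y0 (i + 1) @ y0 i) @ y0 (i + 1)) (x_word a i))"
    by (intro br_eq_conj_by_conjugator br_eq_append_right br_eq.sym[OF braid_relation[OF assms]])
  also have "\<dots> = conj_by (y0 i) (conj_by (y0 (i + 1)) (conj_by (y0 i @ y0 (i + 1)) (x_word a i)))"
    by (simp add: conj_by_def)
  also have "br_eq n \<dots> (conj_by (y0 i) (conj_by (y0 (i + 1)) (x_word a (i + 1))))"
    by (intro br_eq_conj_by conj_by_x_word_up[OF assms])
  finally show ?thesis
    using True by (simp add: x_twisted_def)
qed (use conj_y0_x_word_swap[OF assms, of a] in \<open>simp add: x_twisted_def\<close>)

definition ychain :: "nat \<Rightarrow> nat \<Rightarrow> ('a::zero) brletter list" where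
  "ychain p r = map (\<lambda>j. (False, j, 0)) [p..<r]"

lemma indices_ychain [simp]: "indices (ychain p r) = {p..<r}"
  by (force simp: ychain_def indices_def)

lemma ychain_Cons: "p < r \<Longrightarrow> ychain p r = y0 p @ ychain (Suc p) r"
  by (simp add: ychain_def upt_conv_Cons)

lemma ychain_snoc: "p \<le> r \<Longrightarrow> ychain p (Suc r) = ychain p r @ y0 r"
  by (simp add: ychain_def)

lemma ychain_split: "p \<le> r \<Longrightarrow> r \<le> s \<Longrightarrow> ychain p s = ychain p r @ ychain r s"
  using upt_add_eq_append[of p r "s - r"] by (simp add: ychain_def)

lemma y0_ychain_shift:
  assumes "1 \<le> p" "p < i" "i < r" "r \<le> n - 1"
  shows "br_eq n (y0 i @ ychain p r) (ychain p r @ y0 (i - 1))"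
proof -
  obtain h where i: "i = Suc h"
    using assms by (cases i) auto
  let ?C = "ychain p h" and ?D = "ychain (Suc i) r"
  have "ychain p r = ?C @ ychain h r"
    using assms i by (intro ychain_split) auto
  also have "ychain h r = y0 h @ y0 i @ ?D"
    using assms i by (simp add: ychain_Cons)
  finally have chain: "ychain p r = ?C @ y0 h @ y0 i @ ?D" .
  have "br_commute n (y0 i) ?C" "br_commute n (y0 h) ?D"
    using assms by (auto intro!: br_commute_far simp: far_apart_def i)
  then have C: "br_eq n (y0 i @ ?C) (?C @ y0 i)" and D: "br_eq n (y0 h @ ?D) (?D @ y0 h)"
    by (simp_all add: br_commute_def)
  have "y0 i @ ychain p r = (y0 i @ ?C) @ y0 h @ y0 i @ ?D"
    by (simp add: chain)
  also have "br_eq n \<dots> ((?C @ y0 i) @ y0 h @ y0 i @ ?D)"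
    by (rule br_eq_append_right[OF C])
  also have "\<dots> = ?C @ (y0 i @ y0 h @ y0 i) @ ?D"
    by simp
  also have "br_eq n \<dots> (?C @ (y0 h @ y0 i @ y0 h) @ ?D)"
    using br_eq.sym[OF braid_relation[of h n]] assms by (intro br_eq.ctx) (simp add: i)
  also have "\<dots> = (?C @ y0 h @ y0 i) @ y0 h @ ?D"
    by simp
  also have "br_eq n \<dots> ((?C @ y0 h @ y0 i) @ ?D @ y0 h)"
    by (rule br_eq_append_left[OF D])
  also have "\<dots> = ychain p r @ y0 (i - 1)"
    by (simp add: chain i)
  finally show ?thesis .
qed

(* For p < q this is X(p, q) if b = False and X(q, p) if b = True. *)

definition orbit_word :: "'a::zero \<Rightarrow> bool \<Rightarrow> nat \<Rightarrow> nat \<Rightarrow> 'a brletter list" where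
  "orbit_word a b p q = conj_by (ychain p (q - 1)) (x_twisted a b (q - 1))"

lemma indices_orbit_word: "p < q \<Longrightarrow> indices (orbit_word a b p q) = {p..<q}"
  by (auto simp: orbit_word_def)

lemma orbit_word_adjacent: "orbit_word a b p (Suc p) = x_twisted a b p"
  by (simp add: orbit_word_def ychain_def)

lemma y0_square_commute_orbit_word:
  assumes "1 \<le> m" "m + 1 < q" "q \<le> n"
  shows "br_commute n (y0 m @ y0 m) (orbit_word a b (m + 1) q)"
proof -
  have "br_commute n (y0 m @ y0 m) (orbit_word a b (m + 1) q)" if "1 \<le> m" "m + 2 + k = q" for k m
    using that
  proof (induction k arbitrary: m)
    case 0
    then have "q = Suc (m + 1)"
      by simp
    with 0 show ?case
      using y0_square_commute_x_twisted_next[of m n a b] assms by (simp add: orbit_word_adjacent)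
  next
    case (Suc k)
    let ?W = "orbit_word a b (m + 2) q"
    have m: "1 \<le> m" "m + 1 \<le> n - 1"
      using Suc.prems assms by auto
    have IH: "br_commute n (y0 (m + 1) @ y0 (m + 1)) ?W"
      using Suc.IH[of "m + 1"] Suc.prems by simp
    have far: "br_eq n (conj_by (y0 m) ?W) ?W"
    proof -
      have "indices ?W = {m + 2..<q}"
        using Suc.prems by (intro indices_orbit_word) simp
      then have "br_commute n (y0 m) ?W"
        using Suc.prems assms by (intro br_commute_far) (auto simp: far_apart_def)
      then show ?thesis
        by (simp add: br_commute_iff_conj_by)
    qed
    have "br_commute n (conj_by (y0 m) (y0 (m + 1) @ y0 (m + 1))) ?W"
      by (rule br_commute_cong[OF far br_commute_conj_by_both[OF IH]])
    then have "br_commute n (conj_by (y0 (m + 1) @ y0 m) (y0 (m + 1) @ y0 (m + 1)))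
        (conj_by (y0 (m + 1)) ?W)"
      unfolding conj_by_append by (rule br_commute_conj_by_both)
    then have "br_commute n (y0 m @ y0 m) (conj_by (y0 (m + 1)) ?W)"
      by (rule br_commute_cong_left[OF conj_by_braid_y0_square[OF m]])
    moreover have "conj_by (y0 (m + 1)) ?W = orbit_word a b (m + 1) q"
      using Suc.prems by (simp add: orbit_word_def conj_by_append[symmetric] ychain_Cons)
    ultimately show ?case
      by simp
  qed
  from this[of m "q - m - 2"] assms show ?thesis
    by simp
qed

lemma conj_y0_orbit_word_far:
  assumes "1 \<le> i" "i \<le> n - 1" "1 \<le> p" "p < q" "q \<le> n" "i + 2 \<le> p \<or> q + 1 \<le> i"
  shows "br_eq n (conj_by (y0 i) (orbit_word a b p q)) (orbit_word a b p q)"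
proof -
  have "br_commute n (y0 i) (orbit_word a b p q)"
    using assms by (intro br_commute_far) (auto simp: indices_orbit_word far_apart_def)
  then show ?thesis
    by (simp add: br_commute_iff_conj_by)
qed

lemma conj_y0_orbit_word_before:
  assumes "i + 1 = p" "p < q"
  shows "conj_by (y0 i) (orbit_word a b p q) = orbit_word a b i q"
  using assms by (simp add: orbit_word_def conj_by_append[symmetric] ychain_Cons)

lemma conj_y0_orbit_word_adjacent:
  assumes "1 \<le> p" "p \<le> n - 1"
  shows "br_eq n (conj_by (y0 p) (orbit_word a b p (p + 1))) (orbit_word a (\<not> b) p (p + 1))"
proof (cases b)
  case True
  have "conj_by (y0 p) (orbit_word a b p (p + 1)) = conj_by (y0 p @ y0 p) (x_word a p)"
    using True by (simp add: orbit_word_adjacent x_twisted_def conj_by_def)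
  also have "br_eq n \<dots> (x_word a p)"
    unfolding br_commute_iff_conj_by[symmetric] by (rule y0_square_commute_x_word[OF assms])
  finally show ?thesis
    using True by (simp add: orbit_word_adjacent x_twisted_def)
qed (simp add: orbit_word_adjacent x_twisted_def br_eq.refl)

lemma conj_y0_orbit_word_first:
  assumes "1 \<le> p" "p + 1 < q" "q \<le> n"
  shows "br_eq n (conj_by (y0 p) (orbit_word a b p q)) (orbit_word a b (p + 1) q)"
proof -
  have "conj_by (y0 p) (orbit_word a b p q) = conj_by (y0 p @ y0 p) (orbit_word a b (p + 1) q)"
    using assms by (simp add: orbit_word_def conj_by_append[symmetric] ychain_Cons)
  also have "br_eq n \<dots> (orbit_word a b (p + 1) q)"
    unfolding br_commute_iff_conj_by[symmetric]
    by (rule y0_square_commute_orbit_word) (use assms in auto)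
  finally show ?thesis .
qed

lemma conj_y0_orbit_word_inner:
  assumes "1 \<le> p" "p < i" "i + 1 < q" "q \<le> n"
  shows "br_eq n (conj_by (y0 i) (orbit_word a b p q)) (orbit_word a b p q)"
proof -
  have "conj_by (y0 i) (orbit_word a b p q) = conj_by (y0 i @ ychain p (q - 1)) (x_twisted a b (q - 1))"
    by (simp only: orbit_word_def conj_by_append)
  also have "br_eq n \<dots> (conj_by (ychain p (q - 1) @ y0 (i - 1)) (x_twisted a b (q - 1)))"
    using assms by (intro br_eq_conj_by_conjugator y0_ychain_shift) auto
  also have "\<dots> = conj_by (ychain p (q - 1)) (conj_by (y0 (i - 1)) (x_twisted a b (q - 1)))"
    by (simp only: conj_by_append)
  also have "br_eq n \<dots> (orbit_word a b p q)"
    unfolding orbit_word_def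
  proof (rule br_eq_conj_by)
    have "br_commute n (y0 (i - 1)) (x_twisted a b (q - 1))"
      using assms by (intro br_commute_far) (auto simp: far_apart_def)
    then show "br_eq n (conj_by (y0 (i - 1)) (x_twisted a b (q - 1))) (x_twisted a b (q - 1))"
      by (simp add: br_commute_iff_conj_by)
  qed
  finally show ?thesis .
qed

lemma conj_y0_orbit_word_last:
  assumes "1 \<le> p" "p < i" "i + 1 = q" "q \<le> n"
  shows "br_eq n (conj_by (y0 i) (orbit_word a b p q)) (orbit_word a b p i)"
proof -
  obtain h where i: "i = Suc h"
    using assms by (cases i) auto
  have q: "q = Suc (Suc h)"
    using assms i by simp
  have "conj_by (y0 i) (orbit_word a b p q) = conj_by (y0 i) (conj_by (ychain p h) (conj_by (y0 h) (x_twisted a b i)))"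
    using assms(2) i by (simp add: orbit_word_def q ychain_snoc conj_by_append)
  also have "br_eq n \<dots> (conj_by (ychain p h) (conj_by (y0 i) (conj_by (y0 h) (x_twisted a b i))))"
    using assms i by (intro conj_by_commute br_commute_far) (auto simp: far_apart_def)
  also have "\<dots> = conj_by (ychain p h) (conj_by (y0 (h + 1) @ y0 h) (x_twisted a b (h + 1)))"
    by (simp only: conj_by_append i Suc_eq_plus1)
  also have "br_eq n \<dots> (conj_by (ychain p h) (x_twisted a b h))"
    using assms i by (intro br_eq_conj_by conj_by_x_twisted_down) auto
  also have "\<dots> = orbit_word a b p i"
    by (simp add: orbit_word_def i)
  finally show ?thesis .
qed

lemma conj_y0_orbit_word_after:
  assumes "1 \<le> p" "p < q" "q \<le> n - 1"
  shows "br_eq n (conj_by (y0 q) (orbit_word a b p q)) (orbit_word a b p (q + 1))"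
proof -
  obtain h where q: "q = Suc h"
    using assms by (cases q) auto
  have "conj_by (y0 q) (orbit_word a b p q) = conj_by (y0 q) (conj_by (ychain p h) (x_twisted a b h))"
    by (simp add: orbit_word_def q)
  also have "br_eq n \<dots> (conj_by (ychain p h) (conj_by (y0 q) (x_twisted a b h)))"
    using assms q by (intro conj_by_commute br_commute_far) (auto simp: far_apart_def)
  also have "br_eq n \<dots> (conj_by (ychain p h) (conj_by (y0 h) (x_twisted a b q)))"
    using conj_y0_x_twisted_swap[of h n a b] assms q by (intro br_eq_conj_by) simp
  also have "\<dots> = orbit_word a b p (q + 1)"
    using assms q by (simp add: orbit_word_def ychain_snoc conj_by_append)
  finally show ?thesis .
qed

lemma conj_y0_orbit_word:
  assumes "1 \<le> i" "i \<le> n - 1" "1 \<le> p" "p < q" "q \<le> n"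
  shows "br_eq n (conj_by (y0 i) (orbit_word a b p q))
           (if transpose i (i + 1) p < transpose i (i + 1) q
            then orbit_word a b (transpose i (i + 1) p) (transpose i (i + 1) q)
            else orbit_word a (\<not> b) (transpose i (i + 1) q) (transpose i (i + 1) p))"
proof -
  let ?t = "transpose i (i + 1)"
  consider (far) "i + 2 \<le> p \<or> q + 1 \<le> i" | (before) "i + 1 = p" | (adjacent) "i = p" "q = p + 1"
    | (first) "i = p" "p + 1 < q" | (inner) "p < i" "i + 1 < q" | (last) "p < i" "i + 1 = q"
    | (after) "i = q"
    using assms by linarith
  then show ?thesis
  proof cases
    case far
    then have "?t p = p" "?t q = q"
      using assms by (auto simp: transpose_def)
    with assms show ?thesis
      using conj_y0_orbit_word_far[OF assms far] by auto
  next
    case before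
    then have "?t p = i" "?t q = q"
      using assms by (auto simp: transpose_def)
    moreover have "br_eq n (conj_by (y0 i) (orbit_word a b p q)) (orbit_word a b i q)"
      unfolding conj_y0_orbit_word_before[OF before assms(4)] by (rule br_eq.refl)
    ultimately show ?thesis
      using assms before by auto
  next
    case adjacent
    then show ?thesis
      using conj_y0_orbit_word_adjacent[of p n a b] assms by simp
  next
    case first
    then have "?t p = p + 1" "?t q = q"
      using assms by (auto simp: transpose_def)
    with first show ?thesis
      using conj_y0_orbit_word_first[of p q n a b] assms by auto
  next
    case inner
    then have "?t p = p" "?t q = q"
      using assms by (auto simp: transpose_def)
    with assms show ?thesis
      using conj_y0_orbit_word_inner[of p i q n a b] inner by auto
  next
    case last
    then have "?t p = p" "?t q = i"
      using assms by (auto simp: transpose_def)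
    with last show ?thesis
      using conj_y0_orbit_word_last[of p i q n a b] assms by auto
  next
    case after
    then have "?t p = p" "?t q = q + 1"
      using assms by (auto simp: transpose_def)
    with after show ?thesis
      using conj_y0_orbit_word_after[of p q n a b] assms by auto
  qed
qed

definition pair_word :: "'a::zero \<Rightarrow> nat \<Rightarrow> nat \<Rightarrow> 'a brletter list" where
  "pair_word a p q = (if p < q then orbit_word a False p q else orbit_word a True q p)"

lemma pair_word_Suc: "pair_word a k (Suc k) = x_word a k"
  by (simp add: pair_word_def orbit_word_adjacent x_twisted_def)

lemma conj_y0_pair_word:
  assumes "1 \<le> i" "i \<le> n - 1" "1 \<le> p" "p \<le> n" "1 \<le> q" "q \<le> n" "p \<noteq> q"
  shows "br_eq n (conj_by (y0 i) (pair_word a p q))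
           (pair_word a (transpose i (i + 1) p) (transpose i (i + 1) q))"
proof -
  have "transpose i (i + 1) p \<noteq> transpose i (i + 1) q"
    using assms(7) by (auto dest: transpose_eq_imp_eq)
  then show ?thesis
    using conj_y0_orbit_word[OF assms(1-3) _ assms(6), of a False]
      conj_y0_orbit_word[OF assms(1,2,5) _ assms(4), of a True] assms(7)
    by (cases "p < q") (auto simp: pair_word_def)
qed

lemma conj_letter_pair_word:
  assumes "1 \<le> i" "i \<le> n - 1" "1 \<le> p" "p \<le> n" "1 \<le> q" "q \<le> n" "p \<noteq> q"
  shows "br_eq n (conj_by [(e, i, 0)] (pair_word a p q))
           (pair_word a (transpose i (i + 1) p) (transpose i (i + 1) q))"
proof (cases e)
  case True
  let ?t = "transpose i (i + 1)"
  have "1 \<le> ?t p" "?t p \<le> n" "1 \<le> ?t q" "?t q \<le> n" "?t p \<noteq> ?t q"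
    using assms by (auto simp: transpose_def)
  from conj_y0_pair_word[OF assms(1,2) this, of a]
  have "br_eq n (conj_by (y0 i) (pair_word a (?t p) (?t q))) (pair_word a p q)"
    by simp
  then have "br_eq n (conj_by (inv_word (y0 i)) (pair_word a p q)) (pair_word a (?t p) (?t q))"
    by (rule br_eq.sym[OF conj_by_eq_swap])
  with True show ?thesis
    by simp
qed (use conj_y0_pair_word[OF assms, of a] in simp)

primrec braid_perm_inv :: "(bool \<times> nat) list \<Rightarrow> nat \<Rightarrow> nat" where
  "braid_perm_inv [] = id"
| "braid_perm_inv (x # w) = transpose (snd x) (snd x + 1) \<circ> braid_perm_inv w"

lemma foldl_comp_left:
  fixes g :: "'a \<Rightarrow> 'a"
  shows "foldl (\<lambda>f x. h x \<circ> f) g w = foldl (\<lambda>f x. h x \<circ> f) id w \<circ> g"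
proof (induction w arbitrary: g)
  case (Cons x w)
  show ?case
    using Cons.IH[of "h x \<circ> g"] Cons.IH[of "h x"] by (simp add: comp_assoc)
qed simp

lemma braid_perm_Nil [simp]: "braid_perm [] = id"
  by (simp add: braid_perm_def)

lemma braid_perm_Cons [simp]: "braid_perm (x # w) = braid_perm w \<circ> transpose (snd x) (snd x + 1)"
  unfolding braid_perm_def foldl_Cons comp_id by (rule foldl_comp_left)

lemma braid_perm_braid_perm_inv [simp]: "braid_perm w (braid_perm_inv w p) = p"
  by (induction w arbitrary: p) simp_all

lemma braid_perm_inv_braid_perm [simp]: "braid_perm_inv w (braid_perm w p) = p"
  by (induction w arbitrary: p) simp_all

lemma braid_perm_inv_eq_iff [simp]: "braid_perm_inv w p = braid_perm_inv w q \<longleftrightarrow> p = q"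
  by (metis braid_perm_braid_perm_inv)

lemma braid_perm_inv_eq:
  assumes "braid_perm w = braid_perm w'"
  shows "braid_perm_inv w = braid_perm_inv w'"
proof
  fix p
  have "braid_perm_inv w p = braid_perm_inv w (braid_perm w (braid_perm_inv w' p))"
    using assms by simp
  then show "braid_perm_inv w p = braid_perm_inv w' p"
    by simp
qed

lemma braid_perm_inv_bounded:
  "braid_word n w \<Longrightarrow> 1 \<le> p \<Longrightarrow> p \<le> n \<Longrightarrow> 1 \<le> braid_perm_inv w p \<and> braid_perm_inv w p \<le> n"
  by (induction w) (auto simp: braid_word_def transpose_def)

lemma conj_embed_braid_pair_word:
  assumes "braid_word n w" "1 \<le> p" "p \<le> n" "1 \<le> q" "q \<le> n" "p \<noteq> q"
  shows "br_eq n (conj_by (embed_braid w) (pair_word a p q))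
           (pair_word a (braid_perm_inv w p) (braid_perm_inv w q))"
  using assms(1)
proof (induction w)
  case Nil
  then show ?case
    by (simp add: embed_braid_def br_eq.refl)
next
  case (Cons x w)
  obtain e i where x: "x = (e, i)"
    by (cases x)
  have w: "braid_word n w" and i: "1 \<le> i" "i \<le> n - 1"
    using Cons.prems by (auto simp: braid_word_def x)
  let ?p = "braid_perm_inv w p" and ?q = "braid_perm_inv w q"
  have "?p \<noteq> ?q"
    using assms(6) by simp
  moreover have "1 \<le> ?p" "?p \<le> n" "1 \<le> ?q" "?q \<le> n"
    using braid_perm_inv_bounded[OF w] assms by auto
  ultimately have step: "br_eq n (conj_by [(e, i, 0)] (pair_word a ?p ?q))
      (pair_word a (transpose i (i + 1) ?p) (transpose i (i + 1) ?q))"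
    by (intro conj_letter_pair_word i)
  have "conj_by (embed_braid (x # w)) (pair_word a p q)
      = conj_by [(e, i, 0)] (conj_by (embed_braid w) (pair_word a p q))"
    by (simp add: embed_braid_def x conj_by_def)
  also have "br_eq n \<dots> (conj_by [(e, i, 0)] (pair_word a ?p ?q))"
    by (rule br_eq_conj_by[OF Cons.IH[OF w]])
  also have "br_eq n \<dots> (pair_word a (braid_perm_inv (x # w) p) (braid_perm_inv (x # w) q))"
    using step by (simp add: x)
  finally show ?case .
qed

lemma conj_word_pair_word: "conj_word w k a = conj_by (embed_braid w) (pair_word a k (Suc k))"
  by (simp add: conj_word_def conj_by_def pair_word_Suc x_word_def)

theorem proposition2p4:
  fixes n k :: nat and a :: "'a::ring"
  assumes "n \<ge> 2" and "1 \<le> k" and "k \<le> n - 1"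
  shows "(\<forall>w w'. braid_word n w \<and> braid_word n w' \<and> braid_perm w = braid_perm w'
            \<longrightarrow> br_eq n (conj_word w k a) (conj_word w' k a))
       \<and> (\<forall>w j. braid_word n w \<and> braid_perm w j = k \<and> braid_perm w (j + 1) = k + 1
            \<longrightarrow> br_eq n (conj_word w k a) [(False, j, a), (True, j, 0)])"
proof -
  have conj: "br_eq n (conj_word w k a)
      (pair_word a (braid_perm_inv w k) (braid_perm_inv w (Suc k)))" if "braid_word n w" for w
    unfolding conj_word_pair_word using that assms by (intro conj_embed_braid_pair_word) auto
  show ?thesis
  proof (intro conjI allI impI)
    fix w w'
    assume w: "braid_word n w \<and> braid_word n w' \<and> braid_perm w = braid_perm w'"
    then have "braid_perm_inv w' = braid_perm_inv w"
      by (intro braid_perm_inv_eq) simp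
    with conj[of w'] w have w': "br_eq n (conj_word w' k a)
        (pair_word a (braid_perm_inv w k) (braid_perm_inv w (Suc k)))"
      by simp
    from w have "braid_word n w"
      by simp
    from br_eq.trans[OF conj[OF this] br_eq.sym[OF w']]
    show "br_eq n (conj_word w k a) (conj_word w' k a)" .
  next
    fix w j
    assume w: "braid_word n w \<and> braid_perm w j = k \<and> braid_perm w (j + 1) = k + 1"
    then have "braid_perm_inv w k = j" "braid_perm_inv w (Suc k) = Suc j"
      using braid_perm_inv_braid_perm[of w j] braid_perm_inv_braid_perm[of w "j + 1"] by simp_all
    with w conj[of w] show "br_eq n (conj_word w k a) [(False, j, a), (True, j, 0)]"
      by (simp add: pair_word_Suc x_word_def)
  qed
qed

end
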